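(* Let $\mu$ be a Borel probability measure on $\mathbb{R}^d$ and $u\in\mathbb{R}^d$. Let $\{\theta_k\}_{k\in\mathbb{N}}\subset(0,\pi/2)$ and $\{v_k\}_{k\in\mathbb{N}}\subset\mathcal{S}^{d-1}$ satisfy $\theta_k\to0^+$ and $v_k\to v$ as $k\to\infty$. Then $$\limsup_{k\to\infty}\mu(\mathcal{A}_{u,v_k,\theta_k})\leq\mu(\{y:\langle y-u,v\rangle\geq0\}).$$
   Context: For $u\in\mathbb{R}^d$, $e\in\mathcal{S}^{d-1}$, $\theta\in(0,\pi/2)$: $\mathcal{A}_{u,e,\theta}=\{y\in\mathbb{R}^d:\langle u-y,e\rangle\leq\|u-y\|\,|\sin\theta|/(1-\sin^2\theta)^{1/2}\}$. *)

theory Defs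
  imports "HOL-Probability.Probability"
begin

definition coneA :: "'a::euclidean_space \<Rightarrow> 'a \<Rightarrow> real \<Rightarrow> 'a set" where
  "coneA u e \<theta> = {y. inner (u - y) e \<le> norm (u - y) * \<bar>sin \<theta>\<bar> / sqrt (1 - (sin \<theta>)\<^sup>2)}"

end

theory Submission
  imports Defs
begin

text \<open>The slope \<open>|sin \<theta>| / (1 - sin\<^sup>2 \<theta>)\<^sup>1\<^sup>/\<^sup>2\<close> is \<open>|tan \<theta>|\<close>, which tends to \<open>0\<close>. So a point lying in
  infinitely many of the cones satisfies \<open>\<langle>u - y, v\<^sub>k\<rangle> \<le> |u - y| |tan \<theta>\<^sub>k|\<close> for infinitely many \<open>k\<close>,
  hence \<open>\<langle>u - y, v\<rangle> \<le> 0\<close> in the limit: the set-theoretic limsup of the cones lies in the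
  closed half-space. The reverse Fatou inequality for a finite measure finishes the proof.\<close>

lemma coneA_eq_tan: "coneA u e \<theta> = {y. inner (u - y) e \<le> norm (u - y) * \<bar>tan \<theta>\<bar>}"
proof -
  have "\<bar>sin \<theta>\<bar> / sqrt (1 - (sin \<theta>)\<^sup>2) = \<bar>tan \<theta>\<bar>"
    by (simp add: tan_def abs_divide flip: cos_squared_eq)
  then show ?thesis
    unfolding coneA_def by (metis times_divide_eq_right)
qed

lemma closed_coneA: "closed (coneA u e \<theta>)"
  unfolding coneA_eq_tan by (intro closed_Collect_le continuous_intros)

lemma limsup_coneA_subset_halfspace:
  assumes "\<theta> \<longlonglongrightarrow> 0" and "vs \<longlonglongrightarrow> v"
  shows "limsup (\<lambda>k. coneA u (vs k) (\<theta> k)) \<subseteq> {y. inner (y - u) v \<ge> 0}"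
proof
  fix y assume y: "y \<in> limsup (\<lambda>k. coneA u (vs k) (\<theta> k))"
  show "y \<in> {y. inner (y - u) v \<ge> 0}"
  proof (rule ccontr)
    assume "y \<notin> {y. inner (y - u) v \<ge> 0}"
    then have pos: "inner (u - y) v > 0"
      by (simp add: inner_diff_left)
    have "(\<lambda>k. tan (\<theta> k)) \<longlonglongrightarrow> tan 0"
      using isCont_tendsto_compose[OF isCont_tan assms(1)] by simp
    then have "(\<lambda>k. inner (u - y) (vs k) - norm (u - y) * \<bar>tan (\<theta> k)\<bar>)
            \<longlonglongrightarrow> inner (u - y) v - norm (u - y) * \<bar>tan 0\<bar>"
      by (intro tendsto_intros assms)
    then have "eventually (\<lambda>k. inner (u - y) (vs k) > norm (u - y) * \<bar>tan (\<theta> k)\<bar>) sequentially"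
      using pos by (auto dest: order_tendstoD(1))
    then obtain N where N: "\<And>k. k \<ge> N \<Longrightarrow> y \<notin> coneA u (vs k) (\<theta> k)"
      unfolding eventually_sequentially coneA_eq_tan by (auto simp: not_le)
    from y obtain k where "k \<ge> N" "y \<in> coneA u (vs k) (\<theta> k)"
      by (auto simp: limsup_INF_SUP)
    with N show False by blast
  qed
qed

lemma (in finite_measure) limsup_measure_le_measure_limsup:
  assumes "range A \<subseteq> sets M"
  shows "limsup (\<lambda>k. ereal (measure M (A k))) \<le> ereal (measure M (limsup A))"
proof -
  define B where "B n = (\<Union>k\<in>{n..}. A k)" for n
  have B_sets: "B n \<in> sets M" for n
    using assms unfolding B_def by blast
  have "decseq B"
    unfolding B_def decseq_def by (auto intro: order_trans)
  then have "(\<lambda>n. measure M (B n)) \<longlonglongrightarrow> measure M (\<Inter>n. B n)"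
    using B_sets by (intro finite_Lim_measure_decseq) auto
  moreover have "(\<Inter>n. B n) = limsup A"
    by (simp add: B_def limsup_INF_SUP)
  ultimately have "limsup (\<lambda>n. ereal (measure M (B n))) = ereal (measure M (limsup A))"
    by (intro lim_imp_Limsup) auto
  moreover have "limsup (\<lambda>k. ereal (measure M (A k))) \<le> limsup (\<lambda>n. ereal (measure M (B n)))"
    using assms B_sets
    by (intro Limsup_mono always_eventually allI) (auto simp: B_def intro!: finite_measure_mono)
  ultimately show ?thesis
    by simp
qed

theorem mainTheorem6:
  fixes M :: "'a::euclidean_space measure" and u v :: 'a
    and \<theta> :: "nat \<Rightarrow> real" and vs :: "nat \<Rightarrow> 'a"
  assumes "prob_space M" and "sets M = sets borel"
    and "\<And>k. 0 < \<theta> k \<and> \<theta> k < pi / 2"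
    and "\<And>k. vs k \<in> sphere 0 1"
    and "\<theta> \<longlonglongrightarrow> 0" and "vs \<longlonglongrightarrow> v"
  shows "limsup (\<lambda>k. ereal (measure M (coneA u (vs k) (\<theta> k))))
           \<le> ereal (measure M {y. inner (y - u) v \<ge> 0})"
proof -
  interpret prob_space M by fact
  have cones_sets: "range (\<lambda>k. coneA u (vs k) (\<theta> k)) \<subseteq> sets M"
    using assms(2) borel_closed[OF closed_coneA] by auto
  have "closed {y. inner (y - u) v \<ge> 0}"
    by (intro closed_Collect_le continuous_intros)
  then have halfspace_sets: "{y. inner (y - u) v \<ge> 0} \<in> sets M"
    using assms(2) by simp
  have "limsup (\<lambda>k. ereal (measure M (coneA u (vs k) (\<theta> k))))
          \<le> ereal (measure M (limsup (\<lambda>k. coneA u (vs k) (\<theta> k))))"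
    using cones_sets by (rule limsup_measure_le_measure_limsup)
  also have "\<dots> \<le> ereal (measure M {y. inner (y - u) v \<ge> 0})"
    using limsup_coneA_subset_halfspace[OF assms(5,6)] halfspace_sets
    by (auto intro!: finite_measure_mono)
  finally show ?thesis .
qed

end
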